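(* Let $a\in L_\infty(\mathbb{R}_+)$ be such that the limits $\lim_{v\to0}a(v)=a_0$ and $\lim_{v\to+\infty}a(v)=a_\infty$ exist. Then for each $k\in\mathbb{Z}_+$ the function $$\gamma_{a,k}(\xi)=\int_{\mathbb{R}_+}a\!\left(\frac{v}{2\xi}\right)\ell_k^2(v)\,\mathrm{d}v,\qquad\xi\in\mathbb{R}_+,$$ extends to a continuous function on $[0,+\infty]$, i.e. $\gamma_{a,k}\in C[0,+\infty]$, with $\gamma_{a,k}(+\infty)=a_0$ and $\gamma_{a,k}(0)=a_\infty$.
   Context: $\mathbb{R}_+=(0,\infty)$, $\mathbb{Z}_+=\{0,1,2,\dots\}$. $L_k(x)=\sum_{i=0}^k(-1)^i\binom{k}{i}\frac{x^i}{i!}$ is the Laguerre polynomial of degree $k$ and $\ell_k(x)=e^{-x/2}L_k(x)$. $C[0,+\infty]$ denotes the continuous functions on the compactified half-line $[0,+\infty]$. *)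

theory Defs
  imports "HOL-Analysis.Analysis"
begin

definition laguerre :: "nat \<Rightarrow> real \<Rightarrow> real" where
  "laguerre k x = (\<Sum>i\<le>k. (-1)^i * real (k choose i) * x^i / fact i)"

definition laguerre_fun :: "nat \<Rightarrow> real \<Rightarrow> real" where
  "laguerre_fun k x = exp (- x / 2) * laguerre k x"

definition gamma_ak :: "(real \<Rightarrow> real) \<Rightarrow> nat \<Rightarrow> real \<Rightarrow> real" where
  "gamma_ak a k \<xi> = (LINT v:{0<..}|lborel. a (v / (2 * \<xi>)) * (laguerre_fun k v)^2)"

end

(*
  The weight l_k^2 has total mass 1 on (0, oo): expanding L_k, the moments
  int x^i L_k(x) e^(-x) dx = i! (-1)^k (i choose k) vanish for i < k, which is the orthogonality
  of the Laguerre polynomials. The weight also decays like e^(-x/2). As xi -> oo (resp. xi -> 0)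
  the dilated symbol a(v / (2 xi)) tends to a_0 (resp. a_oo) for every v > 0 and stays bounded,
  so dominated convergence gives the two limits. For continuity on (0, oo) the substitution
  v = 2 xi x moves xi into the continuous factor l_k^2(2 xi x), and the exponential decay
  dominates these functions uniformly while xi stays away from 0.
*)
theory Submission
  imports Defs "HOL-Probability.Distributions" "HOL-Real_Asymp.Real_Asymp"
begin

lemma sum_alternating_choose_mult_choose:
  "(\<Sum>j\<le>k. (-1::real)^j * real (k choose j) * real ((i + j) choose j)) = (-1)^k * real (i choose k)"
proof -
  have neg_upper: "real ((i + j) choose j) = (-1)^j * ((- (real i + 1)) gchoose j)" for j
    using gbinomial_minus[of "real i + 1" j]
    by (simp add: binomial_gbinomial add.commute add.left_commute flip: power_add)
  have "(\<Sum>j\<le>k. (-1::real)^j * real (k choose j) * real ((i + j) choose j))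
     = (\<Sum>j=0..k. ((- (real i + 1)) gchoose j) * (real k gchoose (k - j)))"
    unfolding atLeast0AtMost
  proof (rule sum.cong)
    fix j assume "j \<in> {..k}"
    then have "real (k choose j) = real k gchoose (k - j)"
      by (simp add: binomial_gbinomial[symmetric] binomial_symmetric[symmetric])
    then show "(-1::real)^j * real (k choose j) * real ((i + j) choose j)
             = ((- (real i + 1)) gchoose j) * (real k gchoose (k - j))"
      by (simp add: neg_upper power_mult_distrib[symmetric] flip: power_add)
  qed simp
  also have "\<dots> = (real k - real i - 1) gchoose k"
    by (subst gbinomial_Vandermonde) (simp add: algebra_simps)
  also have "\<dots> = (-1)^k * real (i choose k)"
    using gbinomial_negated_upper[of "real i" k]
    by (simp add: binomial_gbinomial flip: power_add mult.assoc)
  finally show ?thesis .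
qed

lemma laguerre_eq_sum_coeffs:
  "laguerre k x = (\<Sum>i\<le>k. ((-1)^i * real (k choose i) / fact i) * x^i)"
  unfolding laguerre_def by (simp add: field_simps)

lemma laguerre_fun_power2: "laguerre_fun k v ^ 2 = exp (- v) * laguerre k v ^ 2"
proof -
  have "exp (- v / 2) ^ 2 = exp (- v)"
    by (simp add: power2_eq_square exp_add[symmetric])
  then show ?thesis by (simp add: laguerre_fun_def power_mult_distrib)
qed

lemma has_bochner_integral_power_mult_exp:
  "has_bochner_integral lborel (\<lambda>x::real. indicator {0<..} x * (x ^ n * exp (- x))) (fact n)"
proof (rule has_bochner_integral_nn_integral)
  show "(\<lambda>x::real. indicator {0<..} x * (x ^ n * exp (- x))) \<in> borel_measurable lborel"
    by measurable
  show "AE x::real in lborel. 0 \<le> indicator {0<..} x * (x ^ n * exp (- x))"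
    by (intro AE_I2) (auto split: split_indicator)
  have "(\<integral>\<^sup>+x. ennreal (indicator {0<..} x * (x ^ n * exp (- x))) \<partial>lborel)
      = (\<integral>\<^sup>+x. ennreal (x ^ n * exp (- x)) * indicator {0..} x \<partial>lborel)"
    using AE_lborel_singleton[of "0::real"]
    by (intro nn_integral_cong_AE) (auto elim!: eventually_mono split: split_indicator)
  also have "\<dots> = ennreal (fact n)"
    using nn_intergal_power_times_exp_Ici[of n] by simp
  finally show "(\<integral>\<^sup>+x. ennreal (indicator {0<..} x * (x ^ n * exp (- x))) \<partial>lborel) = ennreal (fact n)" .
qed simp

lemma has_bochner_integral_power_mult_laguerre:
  "has_bochner_integral lborel (\<lambda>x. indicator {0<..} x * (x ^ i * laguerre k x * exp (- x)))
     (fact i * ((-1)^k * real (i choose k)))"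
proof -
  let ?c = "\<lambda>j. (-1)^j * real (k choose j) / fact j :: real"
  have "has_bochner_integral lborel
      (\<lambda>x. \<Sum>j\<le>k. ?c j * (indicator {0<..} x * (x ^ (i + j) * exp (- x))))
      (\<Sum>j\<le>k. ?c j * fact (i + j))"
    by (intro has_bochner_integral_sum has_bochner_integral_mult_right has_bochner_integral_power_mult_exp)
  moreover have "(\<lambda>x. \<Sum>j\<le>k. ?c j * (indicator {0<..} x * (x ^ (i + j) * exp (- x))))
      = (\<lambda>x. indicator {0<..} x * (x ^ i * laguerre k x * exp (- x)))"
  proof
    fix x :: real
    have "(\<Sum>j\<le>k. ?c j * (indicator {0<..} x * (x ^ (i + j) * exp (- x))))
        = indicator {0<..} x * x ^ i * exp (- x) * (\<Sum>j\<le>k. ?c j * x ^ j)"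
      by (simp add: sum_distrib_left power_add mult_ac)
    also have "\<dots> = indicator {0<..} x * (x ^ i * laguerre k x * exp (- x))"
      unfolding laguerre_eq_sum_coeffs[symmetric] by (simp add: mult_ac)
    finally show "(\<Sum>j\<le>k. ?c j * (indicator {0<..} x * (x ^ (i + j) * exp (- x))))
        = indicator {0<..} x * (x ^ i * laguerre k x * exp (- x))" .
  qed
  moreover have "(\<Sum>j\<le>k. ?c j * fact (i + j)) = fact i * ((-1)^k * real (i choose k))"
  proof -
    have "fact (i + j) = (fact i * fact j * real ((i + j) choose j) :: real)" for j
    proof -
      have "real (fact j * fact i * ((i + j) choose j)) = real (fact (i + j))"
        using binomial_fact_lemma[of j "i + j"] by simp
      then show ?thesis by (simp only: of_nat_mult of_nat_fact mult_ac)
    qed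
    then have "(\<Sum>j\<le>k. ?c j * fact (i + j))
        = fact i * (\<Sum>j\<le>k. (-1::real)^j * real (k choose j) * real ((i + j) choose j))"
      by (simp add: sum_distrib_left field_simps)
    then show ?thesis by (simp add: sum_alternating_choose_mult_choose)
  qed
  ultimately show ?thesis by simp
qed

lemma has_bochner_integral_laguerre_fun_power2:
  "has_bochner_integral lborel (\<lambda>x. indicator {0<..} x * laguerre_fun k x ^ 2) 1"
proof -
  let ?c = "\<lambda>i. (-1)^i * real (k choose i) / fact i :: real"
  have "has_bochner_integral lborel
      (\<lambda>x. \<Sum>i\<le>k. ?c i * (indicator {0<..} x * (x ^ i * laguerre k x * exp (- x))))
      (\<Sum>i\<le>k. ?c i * (fact i * ((-1)^k * real (i choose k))))"
    by (intro has_bochner_integral_sum has_bochner_integral_mult_right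
        has_bochner_integral_power_mult_laguerre)
  moreover have "(\<lambda>x. \<Sum>i\<le>k. ?c i * (indicator {0<..} x * (x ^ i * laguerre k x * exp (- x))))
      = (\<lambda>x. indicator {0<..} x * laguerre_fun k x ^ 2)"
  proof
    fix x :: real
    have "indicator {0<..} x * laguerre_fun k x ^ 2
        = indicator {0<..} x * exp (- x) * laguerre k x * (\<Sum>i\<le>k. ?c i * x ^ i)"
      unfolding laguerre_fun_power2
      by (simp only: laguerre_eq_sum_coeffs[symmetric]) (simp add: power2_eq_square)
    then show "(\<Sum>i\<le>k. ?c i * (indicator {0<..} x * (x ^ i * laguerre k x * exp (- x))))
        = indicator {0<..} x * laguerre_fun k x ^ 2"
      by (simp add: sum_distrib_left mult_ac)
  qed
  moreover have "(\<Sum>i\<le>k. ?c i * (fact i * ((-1)^k * real (i choose k)))) = 1"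
  proof -
    have "?c i * (fact i * ((-1)^k * real (i choose k))) = (if i = k then 1 else 0)" if "i \<le> k" for i
    proof (cases "i = k")
      case True
      have "((-1::real) ^ k) * (-1) ^ k = 1" by (simp flip: power_mult_distrib)
      with True show ?thesis by simp
    next
      case False
      with that show ?thesis by (simp add: binomial_eq_0)
    qed
    then have "(\<Sum>i\<le>k. ?c i * (fact i * ((-1)^k * real (i choose k))))
        = (\<Sum>i\<le>k. if i = k then 1 else 0)"
      by (intro sum.cong) auto
    then show ?thesis by simp
  qed
  ultimately show ?thesis by simp
qed

lemma power_div_fact_le_exp:
  fixes y :: real assumes "0 \<le> y" shows "y ^ i / fact i \<le> exp y"
proof -
  have exp_sums: "(\<lambda>n. y ^ n / fact n) sums exp y"
    using exp_converges[of y] by (simp add: divide_inverse_commute)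
  have "y ^ i / fact i \<le> (\<Sum>n<Suc i. y ^ n / fact n)"
    using assms by (simp add: sum_nonneg)
  also have "\<dots> \<le> exp y"
    using sum_le_suminf[OF sums_summable[OF exp_sums], of "{..<Suc i}"] sums_unique[OF exp_sums] assms
    by simp
  finally show ?thesis .
qed

lemma abs_laguerre_le: assumes "0 \<le> y" shows "\<bar>laguerre k y\<bar> \<le> 5 ^ k * exp (y / 4)"
proof -
  have "\<bar>laguerre k y\<bar> \<le> (\<Sum>i\<le>k. \<bar>(-1) ^ i * real (k choose i) * y ^ i / fact i\<bar>)"
    unfolding laguerre_def by (rule sum_abs)
  also have "\<dots> = (\<Sum>i\<le>k. real (k choose i) * (4 ^ i * ((y / 4) ^ i / fact i)))"
    using assms by (intro sum.cong refl) (simp add: abs_mult power_divide)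
  also have "\<dots> \<le> (\<Sum>i\<le>k. real (k choose i) * (4 ^ i * exp (y / 4)))"
    using assms by (intro sum_mono mult_left_mono power_div_fact_le_exp) auto
  also have "\<dots> = (\<Sum>i\<le>k. real (k choose i) * 4 ^ i * 1 ^ (k - i)) * exp (y / 4)"
    by (simp add: sum_distrib_left sum_distrib_right mult_ac)
  also have "\<dots> = 5 ^ k * exp (y / 4)"
    using binomial_ring[of "4::real" 1 k] by simp
  finally show ?thesis .
qed

lemma laguerre_fun_power2_le:
  assumes "0 \<le> y" shows "laguerre_fun k y ^ 2 \<le> 25 ^ k * exp (- y / 2)"
proof -
  have "laguerre k y ^ 2 \<le> (5 ^ k * exp (y / 4)) ^ 2"
    using abs_laguerre_le[OF assms, of k] by (simp add: power2_le_iff_abs_le)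
  also have "\<dots> = 25 ^ k * exp (y / 2)"
  proof -
    have "(5::real) ^ k * 5 ^ k = 25 ^ k" by (simp flip: power_mult_distrib)
    moreover have "exp (y / 4) * exp (y / 4) = exp (y / 2)" by (simp flip: exp_add)
    ultimately show ?thesis by (simp add: power2_eq_square mult_ac)
  qed
  finally have "laguerre k y ^ 2 \<le> 25 ^ k * exp (y / 2)" .
  then have "exp (- y) * laguerre k y ^ 2 \<le> exp (- y) * (25 ^ k * exp (y / 2))"
    by simp
  also have "\<dots> = 25 ^ k * exp (- y / 2)"
    by (simp add: exp_add[symmetric] mult_ac)
  finally show ?thesis by (simp add: laguerre_fun_power2)
qed

lemma isCont_laguerre_fun: "isCont (laguerre_fun k) x"
  unfolding laguerre_fun_def[abs_def] laguerre_def by (intro continuous_intros) auto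

lemma borel_measurable_laguerre_fun[measurable]: "laguerre_fun k \<in> borel_measurable borel"
  unfolding laguerre_fun_def[abs_def] laguerre_def by measurable

lemma integrable_indicator_exp_neg:
  fixes c :: real assumes "0 < c"
  shows "integrable lborel (\<lambda>x. indicator {0<..} x * exp (- c * x))"
proof -
  have "integrable lborel (\<lambda>x::real. indicator {0<..} x * (x ^ 0 * exp (- x)))"
    using has_bochner_integral_power_mult_exp[of 0] by (rule integrable.intros)
  from lborel_integrable_real_affine[OF this, of c 0] assms
  have "integrable lborel (\<lambda>x. indicator {0<..} (c * x) * exp (- (c * x)))" by simp
  moreover have "indicator {0<..} (c * x) = (indicator {0<..} x :: real)" for x
    using assms by (auto split: split_indicator simp: zero_less_mult_iff)
  ultimately show ?thesis by simp
qed

lemma integral_dilation_eq_rescaled: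
  fixes A g :: "real \<Rightarrow> real"
  assumes "0 < \<xi>"
  shows "(\<integral>v. A (v / (2 * \<xi>)) * g v \<partial>lborel) = 2 * \<xi> * (\<integral>x. A x * g (2 * \<xi> * x) \<partial>lborel)"
  using lborel_integral_real_affine[of "2 * \<xi>" "\<lambda>v. A (v / (2 * \<xi>)) * g v" 0] assms by simp

context
  fixes A :: "real \<Rightarrow> real" and M :: real
  assumes A_measurable[measurable]: "A \<in> borel_measurable borel"
    and A_bounded: "AE u in lborel. \<bar>A u\<bar> \<le> M"
    and A_nonpos: "\<And>u. u \<le> 0 \<Longrightarrow> A u = 0"
begin

lemma AE_abs_dilation_le:
  assumes "0 < \<xi>"
  shows "AE v in lborel. \<bar>A (v / (2 * \<xi>)) * g v\<bar> \<le> M * \<bar>indicator {0<..} v * g v\<bar>"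
proof -
  have "AE v in lborel. \<bar>A (0 + 1 / (2 * \<xi>) * v)\<bar> \<le> M"
    by (rule AE_borel_affine[OF _ _ A_bounded]) (use assms in auto)
  then show ?thesis
  proof eventually_elim
    case (elim v)
    show ?case
    proof (cases "0 < v")
      case True
      then show ?thesis using elim by (auto simp: abs_mult intro!: mult_right_mono)
    next
      case False
      then have "v / (2 * \<xi>) \<le> 0" using assms by (simp add: divide_nonpos_pos)
      then show ?thesis using False by (simp add: A_nonpos)
    qed
  qed
qed

lemma tendsto_integral_dilation_at_top:
  fixes g \<phi> :: "real \<Rightarrow> real"
  assumes g_measurable[measurable]: "g \<in> borel_measurable borel"
    and g_integral: "has_bochner_integral lborel (\<lambda>v. indicator {0<..} v * g v) I"
    and \<phi>_pos: "eventually (\<lambda>t. 0 < \<phi> t) at_top"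
    and A_lim: "\<And>v. 0 < v \<Longrightarrow> ((\<lambda>t. A (v / (2 * \<phi> t))) \<longlongrightarrow> L) at_top"
  shows "((\<lambda>t. \<integral>v. A (v / (2 * \<phi> t)) * g v \<partial>lborel) \<longlongrightarrow> L * I) at_top"
proof -
  define w where "w v = M * \<bar>indicator {0<..} v * g v\<bar>" for v
  have "((\<lambda>t. \<integral>v. A (v / (2 * \<phi> t)) * g v \<partial>lborel)
          \<longlongrightarrow> (\<integral>v. L * (indicator {0<..} v * g v) \<partial>lborel)) at_top"
  proof (rule integral_dominated_convergence_at_top[where w = w])
    show "integrable lborel w"
      unfolding w_def using g_integral by (intro integrable_mult_right integrable_abs) (rule integrable.intros)
    show "\<forall>\<^sub>F t in at_top. AE v in lborel. norm (A (v / (2 * \<phi> t)) * g v) \<le> w v"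
      by (rule eventually_mono[OF \<phi>_pos]) (simp add: w_def AE_abs_dilation_le)
    show "AE v in lborel. ((\<lambda>t. A (v / (2 * \<phi> t)) * g v) \<longlongrightarrow> L * (indicator {0<..} v * g v)) at_top"
    proof (intro AE_I2)
      fix v :: real
      show "((\<lambda>t. A (v / (2 * \<phi> t)) * g v) \<longlongrightarrow> L * (indicator {0<..} v * g v)) at_top"
      proof (cases "0 < v")
        case True
        then show ?thesis using A_lim[OF True] by (auto intro!: tendsto_intros)
      next
        case False
        have "eventually (\<lambda>t. A (v / (2 * \<phi> t)) * g v = L * (indicator {0<..} v * g v)) at_top"
          using \<phi>_pos by eventually_elim (use False in \<open>simp add: A_nonpos divide_nonpos_pos\<close>)
        then show ?thesis by (rule tendsto_eventually)
      qed
    qed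
  qed measurable
  also have "(\<integral>v. L * (indicator {0<..} v * g v) \<partial>lborel) = L * I"
    using g_integral by (simp add: has_bochner_integral_integral_eq)
  finally show ?thesis .
qed

lemma tendsto_integral_dilation_infinity:
  assumes "g \<in> borel_measurable borel"
    and "has_bochner_integral lborel (\<lambda>v. indicator {0<..} v * g v) I"
    and A_lim: "(A \<longlongrightarrow> L) (at_right 0)"
  shows "((\<lambda>\<xi>. \<integral>v. A (v / (2 * \<xi>)) * g v \<partial>lborel) \<longlongrightarrow> L * I) at_top"
proof (rule tendsto_integral_dilation_at_top[where \<phi> = "\<lambda>t. t", OF assms(1,2)])
  fix v :: real assume "0 < v"
  then have "filterlim (\<lambda>t. v / (2 * t)) (at_right 0) at_top" by real_asymp
  then show "((\<lambda>t. A (v / (2 * t))) \<longlongrightarrow> L) at_top" by (rule filterlim_compose[OF A_lim])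
qed (rule eventually_gt_at_top)

lemma tendsto_integral_dilation_zero:
  assumes "g \<in> borel_measurable borel"
    and "has_bochner_integral lborel (\<lambda>v. indicator {0<..} v * g v) I"
    and A_lim: "(A \<longlongrightarrow> L) at_top"
  shows "((\<lambda>\<xi>. \<integral>v. A (v / (2 * \<xi>)) * g v \<partial>lborel) \<longlongrightarrow> L * I) (at_right 0)"
  unfolding filterlim_at_right_to_top
proof (rule tendsto_integral_dilation_at_top[where \<phi> = inverse, OF assms(1,2)])
  fix v :: real assume "0 < v"
  then have "filterlim (\<lambda>t. v / (2 * inverse t)) at_top at_top" by real_asymp
  then show "((\<lambda>t. A (v / (2 * inverse t))) \<longlongrightarrow> L) at_top" by (rule filterlim_compose[OF A_lim])
qed (auto intro: eventually_mono[OF eventually_gt_at_top[of 0]])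

lemma continuous_on_integral_rescaled:
  fixes g :: "real \<Rightarrow> real"
  assumes g_cont: "\<And>y. isCont g y"
    and g_bound: "\<And>y. 0 \<le> y \<Longrightarrow> \<bar>g y\<bar> \<le> C * exp (- c * y)"
    and "0 < c" "0 < r"
  shows "continuous_on {r..} (\<lambda>s. \<integral>x. A x * g (s * x) \<partial>lborel)"
proof (rule continuous_on_sequentiallyI)
  have "0 \<le> C" using g_bound[of 0] by simp
  have g_measurable[measurable]: "g \<in> borel_measurable borel"
    using g_cont by (intro borel_measurable_continuous_onI continuous_at_imp_continuous_on) auto
  fix u :: "nat \<Rightarrow> real" and s assume u: "\<forall>n. u n \<in> {r..}" "u \<longlonglongrightarrow> s"
  let ?w = "\<lambda>x. M * (C * (indicator {0<..} x * exp (- (c * r) * x)))"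
  show "(\<lambda>n. \<integral>x. A x * g (u n * x) \<partial>lborel) \<longlonglongrightarrow> (\<integral>x. A x * g (s * x) \<partial>lborel)"
  proof (rule integral_dominated_convergence[where w = ?w])
    show "integrable lborel ?w"
      using assms by (intro integrable_mult_right integrable_indicator_exp_neg) simp
    show "AE x in lborel. (\<lambda>n. A x * g (u n * x)) \<longlonglongrightarrow> A x * g (s * x)"
      by (intro AE_I2 tendsto_intros isCont_tendsto_compose[OF g_cont] u)
    show "AE x in lborel. norm (A x * g (u n * x)) \<le> ?w x" for n
      using A_bounded
    proof eventually_elim
      case (elim x)
      show ?case
      proof (cases "0 < x")
        case True
        have "c * x * r \<le> c * x * u n"
          using u(1) True \<open>0 < c\<close> by (intro mult_left_mono) auto
        then have "exp (- c * (u n * x)) \<le> exp (- (c * r) * x)"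
          by (simp add: algebra_simps)
        then have "\<bar>g (u n * x)\<bar> \<le> C * exp (- (c * r) * x)"
          using g_bound[of "u n * x"] u(1) True \<open>0 < r\<close> \<open>0 \<le> C\<close>
          by (smt (verit) atLeast_iff mult_left_mono zero_le_mult_iff)
        then show ?thesis
          using True elim by (auto simp: abs_mult intro!: mult_mono)
      next
        case False
        then show ?thesis by (simp add: A_nonpos)
      qed
    qed
  qed measurable
qed

lemma continuous_on_integral_dilation:
  fixes g :: "real \<Rightarrow> real"
  assumes g_cont: "\<And>y. isCont g y"
    and g_bound: "\<And>y. 0 \<le> y \<Longrightarrow> \<bar>g y\<bar> \<le> C * exp (- c * y)"
    and "0 < c"
  shows "continuous_on {0<..} (\<lambda>\<xi>. \<integral>v. A (v / (2 * \<xi>)) * g v \<partial>lborel)"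
proof (intro continuous_at_imp_continuous_on ballI)
  fix \<xi>\<^sub>0 :: real assume "\<xi>\<^sub>0 \<in> {0<..}"
  then have "0 < \<xi>\<^sub>0" by simp
  define K where "K s = (\<integral>x. A x * g (s * x) \<partial>lborel)" for s
  have "continuous_on {\<xi>\<^sub>0..} K"
    unfolding K_def using continuous_on_integral_rescaled[OF g_cont g_bound \<open>0 < c\<close> \<open>0 < \<xi>\<^sub>0\<close>] .
  then have "isCont K (2 * \<xi>\<^sub>0)"
    using \<open>0 < \<xi>\<^sub>0\<close> by (intro continuous_on_interior) auto
  then have "isCont (\<lambda>\<xi>. 2 * \<xi> * K (2 * \<xi>)) \<xi>\<^sub>0"
    by (intro continuous_intros isCont_o2[where f = "\<lambda>\<xi>. 2 * \<xi>"]) auto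
  moreover have "eventually (\<lambda>\<xi>. (\<integral>v. A (v / (2 * \<xi>)) * g v \<partial>lborel) = 2 * \<xi> * K (2 * \<xi>)) (nhds \<xi>\<^sub>0)"
    using eventually_nhds_in_open[of "{0<..}" \<xi>\<^sub>0] \<open>0 < \<xi>\<^sub>0\<close>
    by (auto elim!: eventually_mono simp: K_def integral_dilation_eq_rescaled)
  ultimately show "isCont (\<lambda>\<xi>. \<integral>v. A (v / (2 * \<xi>)) * g v \<partial>lborel) \<xi>\<^sub>0"
    by (simp add: isCont_cong)
qed

end

definition extend_by_zero :: "(real \<Rightarrow> real) \<Rightarrow> real \<Rightarrow> real" where
  "extend_by_zero a u = indicator {0<..} u * a u"

lemma extend_by_zero_nonpos: "u \<le> 0 \<Longrightarrow> extend_by_zero a u = 0"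
  by (simp add: extend_by_zero_def)

lemma borel_measurable_extend_by_zero:
  "set_borel_measurable lborel {0<..} a \<Longrightarrow> extend_by_zero a \<in> borel_measurable borel"
  unfolding set_borel_measurable_def extend_by_zero_def[abs_def] by simp

lemma AE_abs_extend_by_zero_le:
  "AE v in lborel. 0 < v \<longrightarrow> \<bar>a v\<bar> \<le> M \<Longrightarrow> AE u in lborel. \<bar>extend_by_zero a u\<bar> \<le> \<bar>M\<bar>"
  by (erule eventually_mono) (auto simp: extend_by_zero_def split: split_indicator)

lemma tendsto_extend_by_zero:
  assumes "(a \<longlongrightarrow> L) F" "eventually (\<lambda>u. 0 < u) F"
  shows "(extend_by_zero a \<longlongrightarrow> L) F"
proof -
  have "eventually (\<lambda>u. a u = extend_by_zero a u) F"
    using assms(2) by eventually_elim (simp add: extend_by_zero_def)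
  with assms(1) show ?thesis by (rule tendsto_cong[THEN iffD1, rotated])
qed

lemma gamma_ak_eq_integral:
  assumes "0 < \<xi>"
  shows "gamma_ak a k \<xi> = (\<integral>v. extend_by_zero a (v / (2 * \<xi>)) * laguerre_fun k v ^ 2 \<partial>lborel)"
  unfolding gamma_ak_def set_lebesgue_integral_def
proof (rule Bochner_Integration.integral_cong[OF refl])
  fix v :: real
  have "(0 < v) = (0 < v / (2 * \<xi>))" using assms by (simp add: zero_less_divide_iff)
  then show "indicator {0<..} v *\<^sub>R (a (v / (2 * \<xi>)) * laguerre_fun k v ^ 2)
      = extend_by_zero a (v / (2 * \<xi>)) * laguerre_fun k v ^ 2"
    by (simp add: extend_by_zero_def split: split_indicator)
qed

theorem mainTheorem8:
  fixes a :: "real \<Rightarrow> real" and a0 a_inf :: real and M :: real and k :: nat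
  assumes meas: "set_borel_measurable lborel {0<..} a"
    and ess_bdd: "AE v in lborel. v > 0 \<longrightarrow> \<bar>a v\<bar> \<le> M"
    and lim0: "(a \<longlongrightarrow> a0) (at_right 0)"
    and liminf: "(a \<longlongrightarrow> a_inf) at_top"
  shows "continuous_on {0<..} (gamma_ak a k)
       \<and> (gamma_ak a k \<longlongrightarrow> a0) at_top
       \<and> (gamma_ak a k \<longlongrightarrow> a_inf) (at_right 0)"
proof -
  define \<Gamma> where "\<Gamma> = (\<lambda>\<xi>. \<integral>v. extend_by_zero a (v / (2 * \<xi>)) * laguerre_fun k v ^ 2 \<partial>lborel)"
  note A = borel_measurable_extend_by_zero[OF meas] AE_abs_extend_by_zero_le[OF ess_bdd]
    extend_by_zero_nonpos
  have g_measurable: "(\<lambda>v. laguerre_fun k v ^ 2) \<in> borel_measurable borel" by measurable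
  have g_bound: "\<bar>laguerre_fun k y ^ 2\<bar> \<le> 25 ^ k * exp (- (1 / 2) * y)" if "0 \<le> y" for y
    using laguerre_fun_power2_le[OF that, of k] by simp
  have "continuous_on {0<..} \<Gamma>"
    unfolding \<Gamma>_def using isCont_laguerre_fun
    by (intro continuous_on_integral_dilation[OF A _ g_bound] continuous_intros) auto
  moreover have "(\<Gamma> \<longlongrightarrow> a0) at_top"
    using tendsto_integral_dilation_infinity[OF A g_measurable has_bochner_integral_laguerre_fun_power2
        tendsto_extend_by_zero[OF lim0 eventually_at_right_less]]
    by (simp add: \<Gamma>_def)
  moreover have "(\<Gamma> \<longlongrightarrow> a_inf) (at_right 0)"
    using tendsto_integral_dilation_zero[OF A g_measurable has_bochner_integral_laguerre_fun_power2
        tendsto_extend_by_zero[OF liminf eventually_gt_at_top]]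
    by (simp add: \<Gamma>_def)
  moreover have "gamma_ak a k \<xi> = \<Gamma> \<xi>" if "0 < \<xi>" for \<xi>
    using gamma_ak_eq_integral[OF that] by (simp add: \<Gamma>_def)
  then have "continuous_on {0<..} (gamma_ak a k) \<longleftrightarrow> continuous_on {0<..} \<Gamma>"
      "eventually (\<lambda>\<xi>. gamma_ak a k \<xi> = \<Gamma> \<xi>) at_top"
      "eventually (\<lambda>\<xi>. gamma_ak a k \<xi> = \<Gamma> \<xi>) (at_right 0)"
    by (auto intro!: continuous_on_cong eventually_mono[OF eventually_gt_at_top[of 0]]
        eventually_mono[OF eventually_at_right_less[of 0]])
  ultimately show ?thesis
    by (simp add: tendsto_cong)
qed

end
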